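(* For $n\ge1$ let $M_n$ be the smallest positive integer lying in the ideal $(1-\omega^n)\mathbb{Z}[\lambda]$. Then $M_n$ is even for every $n\ge1$, $M_n$ is divisible by $14$ whenever $n$ is even, and $M_n$ divides the norm $N(1-\omega^n)$. Moreover every periodic point $x$ of least period dividing $n$ of the scaling map $\gamma$ satisfies $x\in\frac{1}{M_n}\mathbb{Z}[\lambda]$.
   Context: Let $\lambda$ be the real root of $x^3+x^2+x-1$, $\omega=\lambda^3=1-\lambda-\lambda^2$; $\mathbb{Z}[\lambda]$ is the ring of integers of $\mathbb{Q}(\lambda)$ and $N$ is the field norm. Scaling map: put $N=7$ and the data (for $j=0,\dots,6$): $\tau_0=\lambda+\lambda^2$, $\tau_1=-1+3\lambda$, $\tau_2=\lambda-\lambda^2$, $\tau_3=-1+2\lambda+\lambda^2$, $\tau_4=1-\lambda-\lambda^2$, $\tau_5=\lambda-\lambda^2$, $\tau_6=-\lambda$; $(\nu_0,\dots,\nu_6)=(4,13,12,8,8,12,4)$; path function $p(j,t)$, $0\le t<\nu_j$, is the $(t+1)$-th entry of the list: $j=0$: $(0,6,3,6)$; $j=1$: $(0,6,3,6,1,6,2,5,6,1,6,3,6)$; $j=2$: $(0,6,3,6,1,6,2,5,6,2,4,6)$; $j=3$: $(0,6,3,6,1,6,3,6)$; $j=4$: $(0,6,4,5,6,2,4,6)$; $j=5$: $(0,6,4,5,6,2,5,6,1,6,3,6)$; $j=6$: $(0,6,4,6)$. Let $\mathcal{V}$ be the set of sequences $\sigma=((j_1,t_1),(j_2,t_2),\dots)$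 with $0\le j_k\le 6$, $0\le t_k<\nu_{j_k}$, $j_k=p(j_{k+1},t_{k+1})$ for all $k\ge1$, and which do not end in any of the tails $(1,9)^\infty,(2,6)^\infty,(3,2)^\infty,(4,6)^\infty,(5,3)^\infty,(6,1)^\infty$. Put $d_i=\sum_{t=0}^{t_i-1}\tau_{p(j_i,t)}$ and $x(\sigma)=\sum_{i\ge1}d_i\omega^{i-1}$; the map $\sigma\mapsto x(\sigma)$ is a bijection $\mathcal{V}\to[0,1)$. The scaling map $\gamma:[0,1)\to[0,1)$ is $\gamma(x)=(x-d_1)\omega^{-1}$, where $d_1$ is the first digit of the code of $x$. A point $x$ with $\gamma^n(x)=x$ has code $((j_1,t_1),\dots,(j_n,t_n))^\infty$ and equals $\frac{1}{1-\omega^n}\sum_{i=1}^n d_i\omega^{i-1}$. *)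

theory Defs
  imports Complex_Main "Jordan_Normal_Form.Determinant"
begin

definition lam :: real where
  "lam = (THE x::real. x^3 + x^2 + x - 1 = 0)"

definition omega :: real where
  "omega = lam ^ 3"

definition Zlam :: "real set" where
  "Zlam = {x. \<exists>c::nat \<Rightarrow> int. x = (\<Sum>k<3. of_int (c k) * lam ^ k)}"

definition zl_coord :: "real \<Rightarrow> nat \<Rightarrow> int" where
  "zl_coord x = (SOME c::nat \<Rightarrow> int. x = (\<Sum>k<3. of_int (c k) * lam ^ k) \<and> (\<forall>k\<ge>3. c k = 0))"

text \<open>Field norm N(x): determinant of the matrix of multiplication by x
  in the basis 1, lam, lam^2 (for x in Z[lambda]).\<close>
definition zl_norm :: "real \<Rightarrow> int" where
  "zl_norm x = det (mat 3 3 (\<lambda>(i, j). zl_coord (x * lam ^ j) i))"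

definition Mn :: "nat \<Rightarrow> int" where
  "Mn n = (LEAST m::int. 0 < m \<and> (\<exists>\<alpha>\<in>Zlam. of_int m = (1 - omega ^ n) * \<alpha>))"

definition tau :: "nat \<Rightarrow> real" where
  "tau j = [lam + lam^2, -1 + 3*lam, lam - lam^2, -1 + 2*lam + lam^2,
            1 - lam - lam^2, lam - lam^2, -lam] ! j"

definition nu :: "nat \<Rightarrow> nat" where
  "nu j = [4, 13, 12, 8, 8, 12, 4] ! j"

definition path_list :: "nat \<Rightarrow> nat list" where
  "path_list j = [[0,6,3,6], [0,6,3,6,1,6,2,5,6,1,6,3,6], [0,6,3,6,1,6,2,5,6,2,4,6],
                  [0,6,3,6,1,6,3,6], [0,6,4,5,6,2,4,6], [0,6,4,5,6,2,5,6,1,6,3,6],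
                  [0,6,4,6]] ! j"

text \<open>p(j,t): the (t+1)-th entry of the list for j.\<close>
definition pth :: "nat \<Rightarrow> nat \<Rightarrow> nat" where
  "pth j t = path_list j ! t"

definition digit :: "nat \<times> nat \<Rightarrow> real" where
  "digit s = (\<Sum>t'<snd s. tau (pth (fst s) t'))"

definition forbidden_tails :: "(nat \<times> nat) set" where
  "forbidden_tails = {(1,9), (2,6), (3,2), (4,6), (5,3), (6,1)}"

text \<open>Admissible sequences; sigma k is the (k+1)-th symbol (j_{k+1}, t_{k+1}).\<close>
definition Vseq :: "(nat \<Rightarrow> nat \<times> nat) set" where
  "Vseq = {\<sigma>. (\<forall>k. fst (\<sigma> k) \<le> 6 \<and> snd (\<sigma> k) < nu (fst (\<sigma> k))
                  \<and> fst (\<sigma> k) = pth (fst (\<sigma> (Suc k))) (snd (\<sigma> (Suc k))))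
             \<and> \<not> (\<exists>e\<in>forbidden_tails. \<exists>K. \<forall>k\<ge>K. \<sigma> k = e)}"

definition xval :: "(nat \<Rightarrow> nat \<times> nat) \<Rightarrow> real" where
  "xval \<sigma> = (\<Sum>i. digit (\<sigma> i) * omega ^ i)"

definition code :: "real \<Rightarrow> (nat \<Rightarrow> nat \<times> nat)" where
  "code x = (THE \<sigma>. \<sigma> \<in> Vseq \<and> xval \<sigma> = x)"

definition gamma :: "real \<Rightarrow> real" where
  "gamma x = (x - digit (code x 0)) / omega"

end

(*
  The integers in (1 - omega^n) Z[lambda] form an ideal of Z. It contains the norm of 1 - omega^n,
  which is nonzero and is 1 - omega^n times its adjugate, so M_n exists and divides that norm.
  Sending lambda to an integer r is a ring homomorphism Z[lambda] -> Z/(r^3 + r^2 + r - 1) that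
  maps omega to r^3. For r = 1 (modulus 2), 1 - omega^n maps to 0; for r = 5 (modulus 154) and
  even n it maps to 1 - 125^n, which is divisible by 14. Hence 2 divides M_n, and 14 does if n is
  even.

  For the periodic points, seven windows with endpoints in (1/2) Z[lambda] partition [0, 1). The
  pieces d(c) + omega [e_j, e_(j+1)) of the symbols c = (j, t) with p(c) = k tile window k. A
  contraction argument places the value of every admissible sequence in the window of its first
  symbol. The excluded tails are exactly the sequences whose value would reach a right endpoint, so
  every x in [0, 1) has a unique code, namely the greedy one. Thus gamma is the greedy map, and a
  point of period n satisfies x = D + omega^n x with D in Z[lambda]. Writing M_n = (1 - omega^n) a
  then gives x M_n = D a in Z[lambda].
*)
theory Submission
  imports Defs "HOL-Number_Theory.Cong" "HOL-Library.Product_Plus"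
begin

section \<open>The cubic unit \<lambda>\<close>

lemma cubic_less_cubic_iff: "x^3 + x^2 + x < y^3 + y^2 + y \<longleftrightarrow> x < (y::real)"
proof -
  have "0 < (x + y + 1)^2 + x^2 + y^2 + 1"
    by (intro add_nonneg_pos add_nonneg_nonneg) simp_all
  moreover have "2 * ((y^3 + y^2 + y) - (x^3 + x^2 + x))
      = (y - x) * ((x + y + 1)^2 + x^2 + y^2 + 1)"
    by (simp add: power2_eq_square power3_eq_cube algebra_simps)
  ultimately show ?thesis
    by (smt (verit) zero_less_mult_iff)
qed

lemma lam_cubic: "lam^3 + lam^2 + lam - 1 = 0"
proof -
  let ?f = "\<lambda>x::real. x^3 + x^2 + x - 1"
  obtain x where x: "?f x = 0"
    using IVT'[of ?f 0 0 1] by (force intro: continuous_intros)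
  have "y = x" if "?f y = 0" for y
    using x that cubic_less_cubic_iff[of x y] cubic_less_cubic_iff[of y x] by linarith
  then show ?thesis
    unfolding lam_def using x by (rule theI[where a = x, rotated])
qed

lemma lam_cube: "lam^3 = 1 - lam - lam^2"
  using lam_cubic by simp

lemma lam_gt: "0.54 < lam" and lam_lt: "lam < 0.55"
  using cubic_less_cubic_iff[of "0.54" lam] cubic_less_cubic_iff[of lam "0.55"] lam_cubic
  by (simp_all add: power_divide)

lemma omega_pos: "0 < omega" and omega_less_1: "omega < 1"
  using lam_gt lam_lt by (simp_all add: omega_def power_less_one_iff)

lemma lam_irrational: "lam \<notin> \<rat>"
proof
  assume "lam \<in> \<rat>"
  then obtain p q :: int where q: "q > 0" and pq: "coprime p q" and lam: "lam = p / q"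
    by (rule Rats_cases') auto
  have "real_of_int (p^3 + p^2 * q + p * q^2 - q^3) = q^3 * (lam^3 + lam^2 + lam - 1)"
    using q by (simp add: lam field_simps power2_eq_square power3_eq_cube)
  then have "p^3 + p^2 * q + p * q^2 - q^3 = 0"
    unfolding lam_cubic by (simp only: mult_zero_right of_int_eq_0_iff)
  then have "p^3 = q * (q^2 - p^2 - p*q)"
    by (simp add: algebra_simps power2_eq_square power3_eq_cube)
  then have "q dvd p^3" by simp
  moreover have "coprime q (p^3)"
    using pq by (simp add: coprime_commute)
  ultimately have "q = 1"
    using q by (metis coprime_common_divisor dvd_refl zdvd1_eq abs_of_pos)
  then have "(0::real) < of_int p" "of_int p < (1::real)"
    using lam lam_gt lam_lt by simp_all
  then show False
    by simp
qed

section \<open>Coordinates in \<open>\<int>[\<lambda>]\<close>\<close>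

definition zl :: "int \<Rightarrow> int \<Rightarrow> int \<Rightarrow> real" where
  "zl a b c = of_int a + of_int b * lam + of_int c * lam^2"

lemma zl_add: "zl a b c + zl d e f = zl (a + d) (b + e) (c + f)"
  by (simp add: zl_def algebra_simps)

lemma zl_diff: "zl a b c - zl d e f = zl (a - d) (b - e) (c - f)"
  by (simp add: zl_def algebra_simps)

lemma zl_mult: "zl a b c * zl d e f =
  zl (a*d + b*f + c*e - c*f) (a*e + b*d - b*f - c*e + 2*c*f) (a*f + b*e + c*d - b*f - c*e)"
proof -
  have "zl a b c * zl d e f - zl (a*d + b*f + c*e - c*f) (a*e + b*d - b*f - c*e + 2*c*f)
      (a*f + b*e + c*d - b*f - c*e)
    = (lam^3 + lam^2 + lam - 1) * (of_int (c*f) * lam + of_int (b*f + c*e - c*f))"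
    by (simp add: zl_def power2_eq_square power3_eq_cube algebra_simps)
  then show ?thesis
    using lam_cubic by simp
qed

lemma zl_of_int: "of_int m = zl m 0 0"
  by (simp add: zl_def)

lemma zl_lam: "lam = zl 0 1 0"
  by (simp add: zl_def)

lemma zl_omega: "omega = zl 1 (-1) (-1)"
  by (simp add: zl_def omega_def lam_cube)

text \<open>The homogenised 2-Eisenstein polynomial \<open>x\<^sup>3 - 2x\<^sup>2 + 2x - 2\<close>; 2-adic descent.\<close>

lemma eisenstein_cubic_form_eq_0:
  fixes b c :: int
  assumes "b^3 - 2*b^2*c + 2*b*c^2 - 2*c^3 = 0"
  shows "c = 0"
  using assms
proof (induction "nat \<bar>c\<bar>" arbitrary: b c rule: less_induct)
  case less
  show ?case
  proof (rule ccontr)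
    assume "c \<noteq> 0"
    have "b^3 = 2 * (b^2*c - b*c^2 + c^3)"
      using less.prems by (simp add: algebra_simps)
    then have "even b"
      by (metis dvd_triv_left even_power zero_less_numeral)
    then obtain b' where b: "b = 2 * b'" ..
    have "c^3 = 2 * (2*b'^3 - 2*b'^2*c + b'*c^2)"
      using less.prems unfolding b by (simp add: algebra_simps power2_eq_square power3_eq_cube)
    then have "even c"
      by (metis dvd_triv_left even_power zero_less_numeral)
    then obtain c' where c: "c = 2 * c'" ..
    have "b'^3 - 2*b'^2*c' + 2*b'*c'^2 - 2*c'^3 = 0"
      using less.prems unfolding b c by (simp add: algebra_simps power2_eq_square power3_eq_cube)
    moreover have "nat \<bar>c'\<bar> < nat \<bar>c\<bar>"
      using \<open>c \<noteq> 0\<close> c by simp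
    ultimately have "c' = 0"
      using less.hyps by blast
    then show False
      using \<open>c \<noteq> 0\<close> c by simp
  qed
qed

lemma zl_eq_0_iff: "zl a b c = 0 \<longleftrightarrow> a = 0 \<and> b = 0 \<and> c = 0"
proof
  assume x: "zl a b c = 0"
  \<comment> \<open>eliminating \<open>\<lambda>\<^sup>2\<close> between \<open>x = 0\<close> and \<open>\<lambda>x = 0\<close> leaves \<open>P + Q\<lambda> = 0\<close>\<close>
  define P where "P = (b - c) * a - c^2"
  define Q where "Q = (b - c) * b - c * (a - c)"
  have "of_int P + of_int Q * lam = of_int (b - c) * zl a b c - of_int c * (zl a b c * lam)"
    by (simp add: zl_lam zl_mult) (simp add: zl_def P_def Q_def algebra_simps power2_eq_square)
  then have PQ: "of_int P + of_int Q * lam = 0"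
    using x by simp
  have "Q = 0"
  proof (rule ccontr)
    assume "Q \<noteq> 0"
    then have "lam = - of_int P / of_int Q"
      using PQ by (simp add: field_simps)
    then show False
      using lam_irrational by (metis Rats_divide Rats_minus_iff Rats_of_int)
  qed
  moreover from this have "P = 0"
    using PQ by simp
  moreover have "b^3 - 2*b^2*c + 2*b*c^2 - 2*c^3 = c * P + (b - c) * Q"
    by (simp add: P_def Q_def algebra_simps power2_eq_square power3_eq_cube)
  ultimately have "c = 0"
    using eisenstein_cubic_form_eq_0 by simp
  with \<open>Q = 0\<close> have "b = 0"
    by (simp add: Q_def)
  with x \<open>c = 0\<close> show "a = 0 \<and> b = 0 \<and> c = 0"
    by (simp add: zl_def)
qed (simp add: zl_def)

lemma zl_eq_iff: "zl a b c = zl a' b' c' \<longleftrightarrow> a = a' \<and> b = b' \<and> c = c'"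
  using zl_eq_0_iff[of "a - a'" "b - b'" "c - c'"] unfolding zl_diff[symmetric] by simp

lemma sum_lessThan_3: "(\<Sum>k<3. f k) = f 0 + f 1 + f (2::nat)"
  by (simp add: eval_nat_numeral add.assoc)

lemma Zlam_iff: "x \<in> Zlam \<longleftrightarrow> (\<exists>a b c. x = zl a b c)"
proof
  assume "x \<in> Zlam"
  then obtain f :: "nat \<Rightarrow> int" where "x = (\<Sum>k<3. of_int (f k) * lam ^ k)"
    unfolding Zlam_def by blast
  then show "\<exists>a b c. x = zl a b c"
    by (auto simp: sum_lessThan_3 zl_def)
next
  assume "\<exists>a b c. x = zl a b c"
  then obtain a b c where "x = zl a b c"
    by blast
  then have "x = (\<Sum>k<3. of_int ([a, b, c] ! k) * lam ^ k)"
    by (simp add: sum_lessThan_3 zl_def)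
  then show "x \<in> Zlam"
    unfolding Zlam_def by blast
qed

lemma zl_in_Zlam [simp]: "zl a b c \<in> Zlam"
  using Zlam_iff by blast

lemma Zlam_add: "x \<in> Zlam \<Longrightarrow> y \<in> Zlam \<Longrightarrow> x + y \<in> Zlam"
  unfolding Zlam_iff using zl_add by metis

lemma Zlam_diff: "x \<in> Zlam \<Longrightarrow> y \<in> Zlam \<Longrightarrow> x - y \<in> Zlam"
  unfolding Zlam_iff using zl_diff by metis

lemma Zlam_mult: "x \<in> Zlam \<Longrightarrow> y \<in> Zlam \<Longrightarrow> x * y \<in> Zlam"
  unfolding Zlam_iff using zl_mult by metis

lemma Zlam_of_int: "of_int m \<in> Zlam"
  by (simp add: zl_of_int)

lemma Zlam_power: "x \<in> Zlam \<Longrightarrow> x ^ n \<in> Zlam"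
  using Zlam_of_int[of 1] by (induction n) (auto intro: Zlam_mult)

lemma Zlam_sum: "(\<And>i. i \<in> A \<Longrightarrow> f i \<in> Zlam) \<Longrightarrow> sum f A \<in> Zlam"
  using Zlam_of_int[of 0] by (induction A rule: infinite_finite_induct) (auto intro: Zlam_add)

lemma omega_in_Zlam: "omega \<in> Zlam"
  by (simp add: zl_omega)

lemma zl_coord_zl: "zl_coord (zl a b c) 0 = a" "zl_coord (zl a b c) 1 = b" "zl_coord (zl a b c) 2 = c"
proof -
  let ?P = "\<lambda>f::nat \<Rightarrow> int. zl a b c = (\<Sum>k<3. of_int (f k) * lam ^ k) \<and> (\<forall>k\<ge>3. f k = 0)"
  have "?P ((\<lambda>k. 0)(0 := a, 1 := b, 2 := c))"
    by (simp add: sum_lessThan_3 zl_def)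
  then have "?P (zl_coord (zl a b c))"
    unfolding zl_coord_def by (rule someI[where P = ?P])
  then have "zl a b c = zl (zl_coord (zl a b c) 0) (zl_coord (zl a b c) 1) (zl_coord (zl a b c) 2)"
    by (simp add: sum_lessThan_3 zl_def)
  then show "zl_coord (zl a b c) 0 = a" "zl_coord (zl a b c) 1 = b" "zl_coord (zl a b c) 2 = c"
    by (simp_all add: zl_eq_iff)
qed

section \<open>The norm\<close>

lemma det_1:
  assumes "B \<in> carrier_mat 1 1"
  shows "det B = B $$ (0, 0)"
proof -
  have "det (mat_delete B 0 0) = 1"
    using mat_delete_carrier[OF assms] by simp
  then show ?thesis
    using laplace_expansion_row[OF assms, of 0] by (simp add: cofactor_def)
qed

lemma det_2:
  assumes B: "B \<in> carrier_mat 2 2"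
  shows "det B = B $$ (0, 0) * B $$ (1, 1) - B $$ (0, 1) * B $$ (1, 0)"
proof -
  have "\<And>j. mat_delete B 0 j \<in> carrier_mat 1 1"
    using mat_delete_carrier[OF B] by simp
  then have "\<And>j. det (mat_delete B 0 j) = B $$ (1, if 0 < j then 0 else 1)"
    using B by (simp add: det_1 mat_delete_def)
  then show ?thesis
    using laplace_expansion_row[OF B, of 0] by (simp add: cofactor_def numeral_2_eq_2 lessThan_Suc)
qed

lemma det_3:
  assumes B: "B \<in> carrier_mat 3 3"
  shows "det B = B $$ (0, 0) * (B $$ (1, 1) * B $$ (2, 2) - B $$ (1, 2) * B $$ (2, 1))
      - B $$ (0, 1) * (B $$ (1, 0) * B $$ (2, 2) - B $$ (1, 2) * B $$ (2, 0))
      + B $$ (0, 2) * (B $$ (1, 0) * B $$ (2, 1) - B $$ (1, 1) * B $$ (2, 0))"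
proof -
  have "\<And>j. mat_delete B 0 j \<in> carrier_mat 2 2"
    using mat_delete_carrier[OF B] by simp
  then have minors: "\<And>j. det (mat_delete B 0 j) =
     B $$ (1, if 0 < j then 0 else 1) * B $$ (2, if 1 < j then 1 else 2)
   - B $$ (1, if 1 < j then 1 else 2) * B $$ (2, if 0 < j then 0 else 1)"
    using B by (simp add: det_2 mat_delete_def numeral_2_eq_2)
  show ?thesis
    using laplace_expansion_row[OF B, of 0]
    by (simp add: cofactor_def minors numeral_3_eq_3 numeral_2_eq_2 lessThan_Suc algebra_simps)
qed

definition mult_mat :: "real \<Rightarrow> int mat" where
  "mult_mat x = mat 3 3 (\<lambda>(i, j). zl_coord (x * lam ^ j) i)"

lemma zl_times_lam: "zl a b c * lam = zl c (a - c) (b - c)"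
  by (simp add: zl_lam zl_mult)

lemma zl_times_lam2: "zl a b c * lam^2 = zl (b - c) (2*c - b) (a - b)"
  by (simp add: power2_eq_square zl_times_lam flip: mult.assoc)

lemma mult_mat_zl:
  "mult_mat (zl a b c) = mat 3 3 (\<lambda>(i, j). [[a, c, b - c], [b, a - c, 2*c - b], [c, b - c, a - b]] ! i ! j)"
proof -
  have "zl_coord (zl a b c * lam ^ j) i = [[a, c, b - c], [b, a - c, 2*c - b], [c, b - c, a - b]] ! i ! j"
    if "i < 3" "j < 3" for i j
    using that zl_coord_zl zl_times_lam zl_times_lam2
    by (auto simp: less_Suc_eq numeral_eq_Suc)
  then show ?thesis
    unfolding mult_mat_def by (intro eq_matI) auto
qed

lemma zl_norm_zl: "zl_norm (zl a b c) =
  a * ((a - c) * (a - b) - (2*c - b) * (b - c)) - c * (b * (a - b) - (2*c - b) * c)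
  + (b - c) * (b * (b - c) - (a - c) * c)"
  unfolding zl_norm_def mult_mat_def[symmetric] mult_mat_zl
  by (subst det_3) (simp_all add: algebra_simps)

lemma zl_mult_adjugate: "zl a b c * zl ((a - c) * (a - b) - (2*c - b) * (b - c))
    (- (b * (a - b) - (2*c - b) * c)) (b * (b - c) - (a - c) * c) = of_int (zl_norm (zl a b c))"
  unfolding zl_norm_zl zl_mult zl_of_int zl_eq_iff by (simp add: algebra_simps)

lemma zl_norm_nonzero:
  assumes "x \<in> Zlam" "x \<noteq> 0"
  shows "zl_norm x \<noteq> 0"
proof
  obtain a b c where x: "x = zl a b c"
    using assms(1) Zlam_iff by blast
  assume "zl_norm x = 0"
  then obtain v where v: "v \<in> carrier_vec 3" "v \<noteq> 0\<^sub>v 3" "mult_mat x *\<^sub>v v = 0\<^sub>v 3"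
    using det_0_iff_vec_prod_zero[of "mult_mat x" 3] unfolding zl_norm_def mult_mat_def by auto
  have row: "(\<Sum>j<3. mult_mat x $$ (i, j) * v $ j) = 0" if "i < 3" for i
  proof -
    have "(mult_mat x *\<^sub>v v) $ i = 0"
      using v(3) that by simp
    then show ?thesis
      using that v(1) by (simp add: mult_mat_def scalar_prod_def atLeast0LessThan)
  qed
  have "a * v$0 + c * v$1 + (b - c) * v$2 = 0" "b * v$0 + (a - c) * v$1 + (2*c - b) * v$2 = 0"
    "c * v$0 + (b - c) * v$1 + (a - b) * v$2 = 0"
    using row[of 0] row[of 1] row[of 2] unfolding x mult_mat_zl sum_lessThan_3 by simp_all
  then have "x * zl (v$0) (v$1) (v$2) = 0"
    unfolding x zl_mult by (simp add: zl_def algebra_simps)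
  then have "v$0 = 0" "v$1 = 0" "v$2 = 0"
    using assms(2) zl_eq_0_iff by auto
  then have "v = 0\<^sub>v 3"
    using v(1) by (intro eq_vecI) (auto simp: less_Suc_eq numeral_3_eq_3 numeral_2_eq_2)
  with v(2) show False ..
qed

section \<open>The integers in the ideal \<open>(1 - \<omega>\<^sup>n)\<close>\<close>

lemma least_positive_int:
  fixes P :: "int \<Rightarrow> bool"
  assumes "0 < m" "P m"
  defines "d \<equiv> LEAST d. 0 < d \<and> P d"
  shows "0 < d" "P d" "0 < x \<Longrightarrow> P x \<Longrightarrow> d \<le> x"
proof -
  define k where "k = (LEAST k::nat. 0 < k \<and> P (int k))"
  have "0 < nat m \<and> P (int (nat m))"
    using assms by simp
  then have k: "0 < k \<and> P (int k)"
    unfolding k_def by (rule LeastI)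
  have k_min: "int k \<le> x" if "0 < x" "P x" for x
    using Least_le[of "\<lambda>k. 0 < k \<and> P (int k)" "nat x"] that by (simp add: k_def le_nat_iff)
  have "d = int k"
    unfolding d_def using k k_min by (intro Least_equality) simp_all
  with k k_min show "0 < d" "P d" "0 < x \<Longrightarrow> P x \<Longrightarrow> d \<le> x"
    by simp_all
qed

lemma least_positive_dvd:
  fixes I :: "int set"
  assumes diff: "\<And>x y. x \<in> I \<Longrightarrow> y \<in> I \<Longrightarrow> x - y \<in> I"
    and mult: "\<And>k x. x \<in> I \<Longrightarrow> k * x \<in> I"
    and "m \<in> I" "m \<noteq> 0"
  defines "d \<equiv> LEAST d. 0 < d \<and> d \<in> I"
  shows "0 < d" "d \<in> I" "x \<in> I \<Longrightarrow> d dvd x"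
proof -
  have "\<bar>m\<bar> \<in> I"
    using mult[OF \<open>m \<in> I\<close>, of "sgn m"] by (simp add: abs_sgn mult.commute)
  note least = least_positive_int[of "\<bar>m\<bar>" "\<lambda>d. d \<in> I", folded d_def, OF _ this]
  then show d: "0 < d" "d \<in> I"
    using \<open>m \<noteq> 0\<close> by simp_all
  assume "x \<in> I"
  then have "x - (x div d) * d \<in> I"
    using d(2) by (intro diff mult)
  then have "x mod d \<in> I"
    by (simp add: minus_div_mult_eq_mod)
  then have "\<not> 0 < x mod d"
    using least(3) \<open>m \<noteq> 0\<close> pos_mod_bound[OF d(1), of x] by fastforce
  then have "x mod d = 0"
    using pos_mod_sign[OF d(1), of x] by linarith
  then show "d dvd x"
    by (simp add: dvd_eq_mod_eq_0)
qed

definition ideal_ints :: "real \<Rightarrow> int set" where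
  "ideal_ints \<beta> = {m. \<exists>\<alpha>\<in>Zlam. of_int m = \<beta> * \<alpha>}"

lemma ideal_ints_diff:
  assumes "x \<in> ideal_ints \<beta>" "y \<in> ideal_ints \<beta>"
  shows "x - y \<in> ideal_ints \<beta>"
proof -
  obtain \<alpha> \<alpha>' where "\<alpha> \<in> Zlam" "\<alpha>' \<in> Zlam" "of_int x = \<beta> * \<alpha>" "of_int y = \<beta> * \<alpha>'"
    using assms by (auto simp: ideal_ints_def)
  then have "\<alpha> - \<alpha>' \<in> Zlam" "of_int (x - y) = \<beta> * (\<alpha> - \<alpha>')"
    by (simp_all add: Zlam_diff right_diff_distrib)
  then show ?thesis
    unfolding ideal_ints_def by blast
qed

lemma ideal_ints_mult:
  assumes "x \<in> ideal_ints \<beta>"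
  shows "k * x \<in> ideal_ints \<beta>"
proof -
  obtain \<alpha> where "\<alpha> \<in> Zlam" "of_int x = \<beta> * \<alpha>"
    using assms by (auto simp: ideal_ints_def)
  then have "of_int k * \<alpha> \<in> Zlam" "of_int (k * x) = \<beta> * (of_int k * \<alpha>)"
    by (simp_all add: Zlam_mult Zlam_of_int mult.left_commute)
  then show ?thesis
    unfolding ideal_ints_def by blast
qed

lemma zl_norm_in_ideal_ints:
  assumes "x \<in> Zlam"
  shows "zl_norm x \<in> ideal_ints x"
proof -
  obtain a b c where x: "x = zl a b c"
    using assms Zlam_iff by blast
  show ?thesis
    unfolding ideal_ints_def x using zl_mult_adjugate[of a b c, symmetric] zl_in_Zlam by blast
qed

lemma one_minus_omega_power_in_Zlam: "1 - omega^n \<in> Zlam"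
  using Zlam_diff[OF Zlam_of_int[of 1] Zlam_power[OF omega_in_Zlam]] by simp

lemma Mn_least:
  assumes "n \<ge> 1"
  shows "0 < Mn n" "Mn n \<in> ideal_ints (1 - omega^n)" "m \<in> ideal_ints (1 - omega^n) \<Longrightarrow> Mn n dvd m"
proof -
  let ?\<beta> = "1 - omega^n"
  have "omega^n < 1"
    using assms omega_pos omega_less_1 by (simp add: power_less_one_iff)
  then have "zl_norm ?\<beta> \<noteq> 0"
    using zl_norm_nonzero one_minus_omega_power_in_Zlam by simp
  note least = least_positive_dvd[OF ideal_ints_diff ideal_ints_mult
      zl_norm_in_ideal_ints[OF one_minus_omega_power_in_Zlam] this]
  have "Mn n = (LEAST d. 0 < d \<and> d \<in> ideal_ints ?\<beta>)"
    by (simp add: Mn_def ideal_ints_def)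
  with least show "0 < Mn n" "Mn n \<in> ideal_ints ?\<beta>" "m \<in> ideal_ints ?\<beta> \<Longrightarrow> Mn n dvd m"
    by simp_all
qed

lemma Mn_dvd_zl_norm: "n \<ge> 1 \<Longrightarrow> Mn n dvd zl_norm (1 - omega^n)"
  using Mn_least(3) zl_norm_in_ideal_ints one_minus_omega_power_in_Zlam by blast

section \<open>Reduction of \<open>\<int>[\<lambda>]\<close> at an integer point\<close>

definition zl_eval :: "int \<Rightarrow> real \<Rightarrow> int" where
  "zl_eval r x = zl_coord x 0 + zl_coord x 1 * r + zl_coord x 2 * r^2"

lemma zl_eval_zl: "zl_eval r (zl a b c) = a + b * r + c * r^2"
  unfolding zl_eval_def zl_coord_zl ..

lemma zl_eval_of_int: "zl_eval r (of_int m) = m"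
  by (simp add: zl_of_int zl_eval_zl)

lemma zl_eval_diff: "x \<in> Zlam \<Longrightarrow> y \<in> Zlam \<Longrightarrow> zl_eval r (x - y) = zl_eval r x - zl_eval r y"
  by (auto simp: Zlam_iff zl_diff zl_eval_zl algebra_simps)

lemma zl_eval_mult:
  assumes "x \<in> Zlam" "y \<in> Zlam"
  shows "[zl_eval r (x * y) = zl_eval r x * zl_eval r y] (mod r^3 + r^2 + r - 1)"
proof -
  obtain a b c d e f where xy: "x = zl a b c" "y = zl d e f"
    using assms Zlam_iff by blast
  have "zl_eval r (x * y) - zl_eval r x * zl_eval r y
      = (r^3 + r^2 + r - 1) * - (c*f*r + b*f + c*e - c*f)"
    unfolding xy zl_mult zl_eval_zl by (simp add: algebra_simps power2_eq_square power3_eq_cube)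
  then show ?thesis
    unfolding cong_iff_dvd_diff by simp
qed

lemma zl_eval_power:
  "x \<in> Zlam \<Longrightarrow> [zl_eval r (x ^ n) = zl_eval r x ^ n] (mod r^3 + r^2 + r - 1)"
proof (induction n)
  case 0
  then show ?case
    using zl_eval_of_int[of r 1] by simp
next
  case (Suc n)
  then have "[zl_eval r (x * x^n) = zl_eval r x * zl_eval r (x^n)] (mod r^3 + r^2 + r - 1)"
    by (simp add: zl_eval_mult Zlam_power)
  also have "[zl_eval r x * zl_eval r (x^n) = zl_eval r x * zl_eval r x ^ n] (mod r^3 + r^2 + r - 1)"
    using Suc by (simp add: cong_scalar_left)
  finally show ?case
    by simp
qed

lemma zl_eval_omega: "[zl_eval r omega = r^3] (mod r^3 + r^2 + r - 1)"
proof -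
  have "zl_eval r omega - r^3 = (r^3 + r^2 + r - 1) * (-1)"
    by (simp add: zl_omega zl_eval_zl)
  then show ?thesis
    unfolding cong_iff_dvd_diff by (simp only: dvd_triv_left)
qed

lemma ideal_ints_cong:
  assumes "m \<in> ideal_ints (1 - omega^n)"
  shows "\<exists>e. [m = (1 - r^(3*n)) * e] (mod r^3 + r^2 + r - 1)"
proof -
  let ?q = "r^3 + r^2 + r - 1"
  obtain \<alpha> where \<alpha>: "\<alpha> \<in> Zlam" "of_int m = (1 - omega^n) * \<alpha>"
    using assms by (auto simp: ideal_ints_def)
  have "m = zl_eval r ((1 - omega^n) * \<alpha>)"
    using \<alpha>(2) zl_eval_of_int[of r m] by simp
  also have "[\<dots> = zl_eval r (1 - omega^n) * zl_eval r \<alpha>] (mod ?q)"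
    using one_minus_omega_power_in_Zlam \<alpha>(1) by (rule zl_eval_mult)
  also have "zl_eval r (1 - omega^n) = 1 - zl_eval r (omega^n)"
    using zl_eval_diff[OF Zlam_of_int[of 1] Zlam_power[OF omega_in_Zlam], of r n] zl_eval_of_int[of r 1]
    by simp
  also have "[(1 - zl_eval r (omega^n)) * zl_eval r \<alpha> = (1 - r^(3*n)) * zl_eval r \<alpha>] (mod ?q)"
  proof (rule cong_scalar_right)
    have "[zl_eval r (omega^n) = zl_eval r omega ^ n] (mod ?q)"
      by (rule zl_eval_power[OF omega_in_Zlam])
    also have "[zl_eval r omega ^ n = (r^3)^n] (mod ?q)"
      by (rule cong_pow[OF zl_eval_omega])
    finally show "[1 - zl_eval r (omega^n) = 1 - r^(3*n)] (mod ?q)"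
      by (simp add: cong_diff power_mult)
  qed
  finally show ?thesis
    by blast
qed

lemma ideal_ints_even: "m \<in> ideal_ints (1 - omega^n) \<Longrightarrow> even m"
  using ideal_ints_cong[of m n 1] by (simp add: cong_0_iff)

lemma ideal_ints_14_dvd:
  assumes "m \<in> ideal_ints (1 - omega^n)" "even n"
  shows "14 dvd m"
proof -
  obtain e where "[m = (1 - 5^(3*n)) * e] (mod 154)"
    using ideal_ints_cong[OF assms(1), of 5] by auto
  then have "[m = (1 - 5^(3*n)) * e] (mod 14)"
    by (rule cong_dvd_modulus) simp
  moreover have "[5^(3*n) = (1::int)] (mod 14)"
  proof -
    have "[(5::int)^3 = -1] (mod 14)"
      by (simp add: cong_def)
    then have "[(5::int)^(3*n) = (-1)^n] (mod 14)"
      by (simp add: power_mult cong_pow)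
    then show ?thesis
      using assms(2) by simp
  qed
  ultimately have "[m = (1 - 1) * e] (mod 14)"
    by (meson cong_diff cong_refl cong_scalar_right cong_trans)
  then show ?thesis
    by (simp add: cong_0_iff)
qed

section \<open>Chains of half-open intervals\<close>

fun chain :: "('c \<Rightarrow> 'a) \<Rightarrow> ('c \<Rightarrow> 'a) \<Rightarrow> 'a \<Rightarrow> 'c list \<Rightarrow> 'a \<Rightarrow> bool" where
  "chain lo hi a [] b \<longleftrightarrow> a = b"
| "chain lo hi a (c # cs) b \<longleftrightarrow> lo c = a \<and> chain lo hi (hi c) cs b"

lemma chain_map:
  "chain lo hi a cs b \<Longrightarrow> (\<And>c. c \<in> set cs \<Longrightarrow> f (lo c) = lo' c \<and> f (hi c) = hi' c) \<Longrightarrow>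
    chain lo' hi' (f a) cs (f b)"
proof (induction cs arbitrary: a)
  case (Cons c cs)
  have "chain lo hi (hi c) cs b"
    using Cons.prems(1) by simp
  then have "chain lo' hi' (f (hi c)) cs (f b)"
    by (rule Cons.IH) (use Cons.prems(2) in auto)
  moreover have "f (hi c) = hi' c" "f a = lo' c"
    using Cons.prems by auto
  ultimately show ?case
    by simp
qed simp

lemma chain_upt: "m \<le> n \<Longrightarrow> chain f (\<lambda>k. f (Suc k)) (f m) [m..<n] (f n)"
  by (induction m rule: inc_induct) (simp_all add: upt_conv_Cons)

context
  fixes lo hi :: "'c \<Rightarrow> 'a::linorder"
begin

lemma chain_le: "chain lo hi a cs b \<Longrightarrow> \<forall>c\<in>set cs. lo c < hi c \<Longrightarrow> a \<le> b"
  by (induction cs arbitrary: a) force+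

lemma chain_bounds:
  "chain lo hi a cs b \<Longrightarrow> \<forall>c\<in>set cs. lo c < hi c \<Longrightarrow> c \<in> set cs \<Longrightarrow> a \<le> lo c \<and> hi c \<le> b"
proof (induction cs arbitrary: a)
  case (Cons d cs)
  then show ?case
    using chain_le[of "hi d" cs b] by (cases "c = d") force+
qed simp

lemma chain_cover:
  "chain lo hi a cs b \<Longrightarrow> a \<le> y \<Longrightarrow> y < b \<Longrightarrow> \<exists>c\<in>set cs. lo c \<le> y \<and> y < hi c"
  by (induction cs arbitrary: a) (auto, metis not_le)

lemma chain_unique:
  assumes "chain lo hi a cs b" "\<forall>c\<in>set cs. lo c < hi c"
    and "c \<in> set cs" "lo c \<le> y" "y < hi c"
    and "c' \<in> set cs" "lo c' \<le> y" "y < hi c'"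
  shows "c = c'"
  using assms
proof (induction cs arbitrary: a)
  case (Cons d cs)
  have later: "hi d \<le> lo e" if "e \<in> set cs" for e
    using chain_bounds[of "hi d" cs b e] Cons.prems(1,2) that by simp
  show ?case
    using Cons.IH[of "hi d"] Cons.prems later by (cases "c = d"; cases "c' = d") force+
qed simp

lemma chain_last_hi: "chain lo hi a cs b \<Longrightarrow> cs \<noteq> [] \<Longrightarrow> hi (last cs) = b"
  by (induction cs arbitrary: a) (auto simp: neq_Nil_conv)

lemma chain_hi_eq_imp_last:
  assumes "chain lo hi a cs b" "\<forall>c\<in>set cs. lo c < hi c" "c \<in> set cs" "hi c = b"
  shows "c = last cs"
  using assms
proof (induction cs arbitrary: a)
  case (Cons d cs)
  show ?case
  proof (cases "cs = []")
    case False
    then have "hi d < b"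
      using Cons.prems chain_le[of "hi (hd cs)" "tl cs" b] by (cases cs) auto
    then show ?thesis
      using Cons False by auto
  qed (use Cons in simp)
qed simp

end

section \<open>The tiling of \<open>[0, 1)\<close>\<close>

text \<open>Exact arithmetic in \<open>\<frac>1 2 \<int>[\<lambda>]\<close>: the triple \<open>(a, b, c)\<close> stands for \<open>(a + b\<lambda> + c\<lambda>\<^sup>2)/2\<close>.\<close>

type_synonym half_zl = "int \<times> int \<times> int"

definition hval :: "half_zl \<Rightarrow> real" where
  "hval u = zl (fst u) (fst (snd u)) (snd (snd u)) / 2"

definition omega_times :: "half_zl \<Rightarrow> half_zl" where
  "omega_times u = (case u of (a, b, c) \<Rightarrow> (a - b, 2*b - a - c, 2*c - a))"

lemma hval_add: "hval (u + v) = hval u + hval v"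
  by (simp add: hval_def zl_def algebra_simps add_divide_distrib)

lemma hval_zero: "hval 0 = 0"
  by (simp add: hval_def zl_def)

lemma hval_sum_list: "hval (sum_list us) = sum_list (map hval us)"
  by (induction us) (simp_all add: hval_add hval_zero)

lemma hval_omega_times: "hval (omega_times u) = omega * hval u"
  by (cases u) (simp add: hval_def omega_times_def zl_omega zl_mult algebra_simps)

definition tau_coords :: "nat \<Rightarrow> half_zl" where
  "tau_coords k = [(0,2,2), (-2,6,0), (0,2,-2), (-2,4,2), (2,-2,-2), (0,2,-2), (0,-2,0)] ! k"

lemma less_7_cases: "k < 7 \<Longrightarrow> k = 0 \<or> k = 1 \<or> k = 2 \<or> k = 3 \<or> k = 4 \<or> k = 5 \<or> (k::nat) = 6"
  by arith

lemma tau_eq_hval: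
  assumes "k < 7"
  shows "tau k = hval (tau_coords k)"
  using less_7_cases[OF assms] by (elim disjE) (simp_all add: tau_def tau_coords_def hval_def zl_def)

lemma tau_in_Zlam:
  assumes "k < 7"
  shows "tau k \<in> Zlam"
proof -
  have "tau k = zl (fst (tau_coords k) div 2) (fst (snd (tau_coords k)) div 2) (snd (snd (tau_coords k)) div 2)"
    using less_7_cases[OF assms] by (elim disjE) (simp_all add: tau_def tau_coords_def zl_def)
  then show ?thesis
    by simp
qed

lemma path_list_less_7:
  assumes "j < 7" "k \<in> set (path_list j)"
  shows "k < 7"
  using less_7_cases[OF assms(1)] assms(2) by (elim disjE) (auto simp: path_list_def)

lemma nu_eq_length:
  assumes "j < 7"
  shows "nu j = length (path_list j)"
  using less_7_cases[OF assms] by (elim disjE) (simp_all add: nu_def path_list_def)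

definition symbol :: "nat \<times> nat \<Rightarrow> bool" where
  "symbol c \<longleftrightarrow> fst c < 7 \<and> snd c < nu (fst c)"

definition parent :: "nat \<times> nat \<Rightarrow> nat" where
  "parent c = pth (fst c) (snd c)"

lemma parent_less_7: "symbol c \<Longrightarrow> parent c < 7"
  using path_list_less_7 nu_eq_length by (auto simp: symbol_def parent_def pth_def)

definition digit_coords :: "nat \<times> nat \<Rightarrow> half_zl" where
  "digit_coords c = sum_list (map tau_coords (take (snd c) (path_list (fst c))))"

lemma digit_eq_hval:
  assumes "symbol c"
  shows "digit c = hval (digit_coords c)"
proof -
  let ?xs = "path_list (fst c)"
  have len: "snd c \<le> length ?xs" and xs: "\<forall>k\<in>set ?xs. k < 7"
    using assms nu_eq_length path_list_less_7 by (auto simp: symbol_def)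
  have "digit c = (\<Sum>t<snd c. tau (?xs ! t))"
    by (simp add: digit_def pth_def)
  also have "\<dots> = sum_list (map tau (take (snd c) ?xs))"
    using len by (simp add: sum_list_sum_nth atLeast0LessThan min_def)
  also have "\<dots> = sum_list (map (hval \<circ> tau_coords) (take (snd c) ?xs))"
    using xs by (intro arg_cong[where f = sum_list] map_cong) (auto simp: tau_eq_hval dest: in_set_takeD)
  finally show ?thesis
    by (simp add: digit_coords_def hval_sum_list)
qed

lemma digit_in_Zlam: "symbol c \<Longrightarrow> digit c \<in> Zlam"
  unfolding digit_def symbol_def pth_def
  using nu_eq_length path_list_less_7 by (intro Zlam_sum tau_in_Zlam) auto

text \<open>Window \<open>k < 7\<close> is \<open>[edge k, edge (k + 1))\<close>; \<open>tiles k\<close> lists the symbols with parent \<open>k\<close>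
  in the left-to-right order of their pieces.\<close>

definition edge_coords :: "nat \<Rightarrow> half_zl" where
  "edge_coords k = [(0,0,0), (2,-2,-2), (2,-4,2), (3,-4,-1), (1,0,-1), (-1,2,3), (0,2,0), (2,0,0)] ! k"

definition edge :: "nat \<Rightarrow> real" where
  "edge k = hval (edge_coords k)"

definition piece_lo :: "nat \<times> nat \<Rightarrow> real" where
  "piece_lo c = digit c + omega * edge (fst c)"

definition piece_hi :: "nat \<times> nat \<Rightarrow> real" where
  "piece_hi c = digit c + omega * edge (Suc (fst c))"

definition tiles :: "nat \<Rightarrow> (nat \<times> nat) list" where
  "tiles k = [[(0, 0), (1, 0), (2, 0), (3, 0), (4, 0), (5, 0), (6, 0)],
   [(1, 4), (2, 4), (3, 4), (5, 8), (1, 9)],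
   [(2, 9), (4, 5), (5, 5), (1, 6), (2, 6)],
   [(3, 6), (5, 10), (1, 11), (0, 2), (1, 2), (2, 2), (3, 2)],
   [(4, 2), (5, 2), (6, 2), (2, 10), (4, 6)],
   [(5, 6), (1, 7), (2, 7), (4, 3), (5, 3)],
   [(6, 3), (2, 11), (4, 7), (3, 7), (5, 11), (1, 12), (0, 3), (1, 3), (2, 3), (3, 3), (5, 7),
    (1, 8), (2, 8), (4, 4), (5, 4), (1, 5), (2, 5), (3, 5), (5, 9), (1, 10), (0, 1), (1, 1),
    (2, 1), (3, 1), (4, 1), (5, 1), (6, 1)]] ! k"

lemma tiles_chain_coords:
  assumes "k < 7"
  shows "chain (\<lambda>c. digit_coords c + omega_times (edge_coords (fst c)))
    (\<lambda>c. digit_coords c + omega_times (edge_coords (Suc (fst c))))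
    (edge_coords k) (tiles k) (edge_coords (Suc k))"
  using less_7_cases[OF assms]
  by (elim disjE) (simp_all add: tiles_def edge_coords_def digit_coords_def tau_coords_def
      omega_times_def path_list_def)

lemma tiles_symbols:
  assumes "k < 7" "c \<in> set (tiles k)"
  shows "symbol c \<and> parent c = k"
  using less_7_cases[OF assms(1)] assms(2)
  by (elim disjE) (auto simp: tiles_def symbol_def parent_def nu_def pth_def path_list_def)

lemma symbol_in_tiles:
  assumes "symbol c"
  shows "c \<in> set (tiles (parent c))"
proof -
  have "list_all (\<lambda>t. (j, t) \<in> set (tiles (pth j t))) [0..<nu j]" if "j < 7" for j
    using less_7_cases[OF that]
    by (elim disjE) (simp_all add: tiles_def nu_def pth_def path_list_def upt_rec)
  then show ?thesis
    using assms by (cases c) (auto simp: symbol_def parent_def list_all_iff)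
qed

lemma edge_less_edge_Suc:
  assumes "k < 7"
  shows "edge k < edge (Suc k)"
proof -
  have "0.2916 < lam^2" "lam^2 < 0.3025"
    using power_strict_mono[OF lam_gt, of 2] power_strict_mono[OF lam_lt, of 2] lam_gt
    by (simp_all add: power_divide)
  then show ?thesis
    using less_7_cases[OF assms] lam_gt lam_lt
    by (elim disjE) (simp_all add: edge_def edge_coords_def hval_def zl_def)
qed

lemma edge_0: "edge 0 = 0" and edge_7: "edge 7 = 1"
  by (simp_all add: edge_def edge_coords_def hval_def zl_def)

lemma piece_lo_less_hi: "symbol c \<Longrightarrow> piece_lo c < piece_hi c"
  using edge_less_edge_Suc omega_pos by (simp add: piece_lo_def piece_hi_def symbol_def)

lemma tiles_chain:
  assumes "k < 7"
  shows "chain piece_lo piece_hi (edge k) (tiles k) (edge (Suc k))"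
  unfolding edge_def using tiles_chain_coords[OF assms]
  by (rule chain_map) (auto simp: piece_lo_def piece_hi_def edge_def hval_add hval_omega_times
      digit_eq_hval dest: tiles_symbols[OF assms])

lemma tiles_increasing: "k < 7 \<Longrightarrow> \<forall>c\<in>set (tiles k). piece_lo c < piece_hi c"
  using tiles_symbols piece_lo_less_hi by blast

lemma windows_chain: "chain edge (\<lambda>k. edge (Suc k)) 0 [0..<7] 1"
  using chain_upt[of 0 7 edge] by (simp add: edge_0 edge_7)

lemma windows_increasing: "\<forall>k\<in>set [0..<7]. edge k < edge (Suc k)"
  using edge_less_edge_Suc by simp

lemma edge_bounds: "k < 7 \<Longrightarrow> 0 \<le> edge k \<and> edge (Suc k) \<le> 1"
  using chain_bounds[OF windows_chain windows_increasing] by simp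

lemma window_unique:
  "k < 7 \<Longrightarrow> edge k \<le> y \<Longrightarrow> y < edge (Suc k) \<Longrightarrow> k' < 7 \<Longrightarrow> edge k' \<le> y \<Longrightarrow> y < edge (Suc k') \<Longrightarrow> k = k'"
  using chain_unique[OF windows_chain windows_increasing] by simp

lemma piece_in_window: "symbol c \<Longrightarrow> edge (parent c) \<le> piece_lo c \<and> piece_hi c \<le> edge (Suc (parent c))"
  using chain_bounds[OF tiles_chain tiles_increasing] parent_less_7 symbol_in_tiles by blast

lemma piece_unique:
  assumes "symbol c" "piece_lo c \<le> y" "y < piece_hi c"
    and "symbol c'" "piece_lo c' \<le> y" "y < piece_hi c'"
  shows "c = c'"
proof -
  have "edge (parent c) \<le> y" "y < edge (Suc (parent c))"
    "edge (parent c') \<le> y" "y < edge (Suc (parent c'))"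
    using piece_in_window[of c] piece_in_window[of c'] assms by force+
  then have "parent c = parent c'"
    using window_unique parent_less_7 assms by blast
  moreover have "c \<in> set (tiles (parent c))" "c' \<in> set (tiles (parent c'))"
    using symbol_in_tiles assms by simp_all
  moreover note k = parent_less_7[OF assms(1)]
  ultimately show ?thesis
    using chain_unique[OF tiles_chain[OF k] tiles_increasing[OF k]] assms by simp
qed

lemma piece_exists:
  assumes "0 \<le> y" "y < 1"
  shows "\<exists>c. symbol c \<and> piece_lo c \<le> y \<and> y < piece_hi c"
proof -
  obtain k where k: "k < 7" "edge k \<le> y" "y < edge (Suc k)"
    using chain_cover[OF windows_chain assms] by auto
  then obtain c where "c \<in> set (tiles k)" "piece_lo c \<le> y" "y < piece_hi c"
    using chain_cover[OF tiles_chain] by blast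
  then show ?thesis
    using tiles_symbols[OF k(1)] by blast
qed

definition top_symbol :: "nat \<Rightarrow> nat \<times> nat" where
  "top_symbol k = last (tiles k)"

lemma tiles_nonempty:
  assumes "k < 7"
  shows "tiles k \<noteq> []"
  using less_7_cases[OF assms] by (elim disjE) (simp_all add: tiles_def)

lemma top_symbol:
  assumes "k < 7"
  shows "symbol (top_symbol k)" "parent (top_symbol k) = k" "piece_hi (top_symbol k) = edge (Suc k)"
  using tiles_symbols[OF assms last_in_set[OF tiles_nonempty[OF assms]]]
    chain_last_hi[OF tiles_chain[OF assms] tiles_nonempty[OF assms]]
  by (simp_all add: top_symbol_def)

lemma piece_hi_eq_imp_top_symbol:
  "symbol c \<Longrightarrow> piece_hi c = edge (Suc (parent c)) \<Longrightarrow> c = top_symbol (parent c)"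
  unfolding top_symbol_def
  using chain_hi_eq_imp_last[OF tiles_chain tiles_increasing] parent_less_7 symbol_in_tiles by blast

lemma fst_top_symbol:
  assumes "k < 7"
  shows "fst (top_symbol k) = (if k = 0 then 6 else k)"
  using less_7_cases[OF assms] by (elim disjE) (simp_all add: top_symbol_def tiles_def)

lemma forbidden_tails_eq: "forbidden_tails = top_symbol ` {1..6}"
proof -
  have "{1..6} = {1, 2, 3, 4, 5, 6::nat}"
    by auto
  then show ?thesis
    by (simp add: forbidden_tails_def top_symbol_def tiles_def)
qed

section \<open>Codes\<close>

definition admissible :: "(nat \<Rightarrow> nat \<times> nat) \<Rightarrow> bool" where
  "admissible \<sigma> \<longleftrightarrow> (\<forall>i. symbol (\<sigma> i) \<and> fst (\<sigma> i) = parent (\<sigma> (Suc i)))"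

definition shift :: "(nat \<Rightarrow> 'a) \<Rightarrow> nat \<Rightarrow> 'a" where
  "shift \<sigma> = (\<lambda>i. \<sigma> (Suc i))"

lemma Vseq_iff: "\<sigma> \<in> Vseq \<longleftrightarrow> admissible \<sigma> \<and> \<not> (\<exists>e\<in>forbidden_tails. \<exists>K. \<forall>k\<ge>K. \<sigma> k = e)"
proof -
  have "(n::nat) \<le> 6 \<longleftrightarrow> n < 7" for n
    by arith
  then show ?thesis
    unfolding Vseq_def admissible_def symbol_def parent_def by simp
qed

lemma admissible_shift: "admissible \<sigma> \<Longrightarrow> admissible (shift \<sigma>)"
  by (simp add: admissible_def shift_def)

lemma Vseq_shift:
  assumes "\<sigma> \<in> Vseq"
  shows "shift \<sigma> \<in> Vseq"
proof -
  have "\<not> (\<forall>k\<ge>K. shift \<sigma> k = e)" if "e \<in> forbidden_tails" for e K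
  proof
    assume tail: "\<forall>k\<ge>K. shift \<sigma> k = e"
    have "\<forall>k\<ge>Suc K. \<sigma> k = e"
    proof (intro allI impI)
      fix k
      assume "Suc K \<le> k"
      then obtain k' where "k = Suc k'" "K \<le> k'"
        by (cases k) auto
      with tail show "\<sigma> k = e"
        by (simp add: shift_def)
    qed
    with assms that show False
      unfolding Vseq_iff by blast
  qed
  with assms show ?thesis
    by (auto simp: Vseq_iff admissible_shift)
qed

lemma digit_abs_le_1:
  assumes "symbol c"
  shows "\<bar>digit c\<bar> \<le> 1"
proof -
  have "0 \<le> piece_lo c" "piece_lo c \<le> 1"
    using piece_in_window[OF assms] piece_lo_less_hi[OF assms] edge_bounds[OF parent_less_7[OF assms]]
    by linarith+
  moreover have "0 \<le> omega * edge (fst c)" "omega * edge (fst c) \<le> 1"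
    using assms edge_bounds[of "fst c"] edge_less_edge_Suc[of "fst c"] omega_pos omega_less_1
    by (auto simp: symbol_def mult_le_one)
  ultimately show ?thesis
    unfolding piece_lo_def by linarith
qed

lemma digit_term_bound: "admissible \<sigma> \<Longrightarrow> \<bar>digit (\<sigma> i) * omega ^ i\<bar> \<le> omega ^ i"
  using digit_abs_le_1[of "\<sigma> i"] omega_pos
  by (simp add: admissible_def abs_mult mult_left_le_one_le)

lemma summable_omega_power: "summable (\<lambda>i. omega ^ i)"
  using omega_pos omega_less_1 by (simp add: summable_geometric)

lemma summable_xval: "admissible \<sigma> \<Longrightarrow> summable (\<lambda>i. digit (\<sigma> i) * omega ^ i)"
  using digit_term_bound by (intro summable_comparison_test'[OF summable_omega_power]) simp

lemma xval_unfold: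
  assumes "admissible \<sigma>"
  shows "xval \<sigma> = digit (\<sigma> 0) + omega * xval (shift \<sigma>)"
proof -
  have "xval \<sigma> - digit (\<sigma> 0) = (\<Sum>i. omega * (digit (shift \<sigma> i) * omega ^ i))"
    using suminf_split_head[OF summable_xval[OF assms]] by (simp add: xval_def shift_def algebra_simps)
  also have "\<dots> = omega * xval (shift \<sigma>)"
    unfolding xval_def by (rule suminf_mult[OF summable_xval[OF admissible_shift[OF assms]]])
  finally show ?thesis
    by simp
qed

lemma abs_xval_le:
  assumes "admissible \<sigma>"
  shows "\<bar>xval \<sigma>\<bar> \<le> 1 / (1 - omega)"
proof -
  have abs_summable: "summable (\<lambda>i. \<bar>digit (\<sigma> i) * omega ^ i\<bar>)"
    using digit_term_bound[OF assms] by (intro summable_comparison_test'[OF summable_omega_power]) simp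
  then have "\<bar>xval \<sigma>\<bar> \<le> (\<Sum>i. \<bar>digit (\<sigma> i) * omega ^ i\<bar>)"
    using summable_norm[of "\<lambda>i. digit (\<sigma> i) * omega ^ i"] by (simp add: xval_def)
  also have "\<dots> \<le> (\<Sum>i. omega ^ i)"
    using digit_term_bound[OF assms] abs_summable summable_omega_power by (rule suminf_le)
  also have "\<dots> = 1 / (1 - omega)"
    using suminf_geometric[of omega] omega_pos omega_less_1 by simp
  finally show ?thesis .
qed

lemma bounded_contracting_nonpos:
  fixes g :: "'a \<Rightarrow> real"
  assumes invariant: "\<And>x. P x \<Longrightarrow> P (f x)"
    and contracting: "\<And>x. P x \<Longrightarrow> g x \<le> q * g (f x)"
    and bounded: "\<And>x. P x \<Longrightarrow> g x \<le> K"
    and q: "0 \<le> q" "q < 1"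
    and "P x"
  shows "g x \<le> 0"
proof -
  have "\<forall>x. P x \<longrightarrow> g x \<le> q ^ m * K" for m
  proof (induction m)
    case (Suc m)
    show ?case
    proof (intro allI impI)
      fix x
      assume "P x"
      then have "g x \<le> q * g (f x)"
        by (rule contracting)
      also have "\<dots> \<le> q * (q ^ m * K)"
        using Suc invariant[OF \<open>P x\<close>] q by (simp add: mult_left_mono)
      finally show "g x \<le> q ^ Suc m * K"
        by (simp add: mult.assoc)
    qed
  qed (use bounded in simp)
  moreover have "(\<lambda>m. q ^ m * K) \<longlonglongrightarrow> 0"
    using q by (intro tendsto_mult_left_zero LIMSEQ_power_zero) simp
  ultimately show ?thesis
    using \<open>P x\<close> by (intro LIMSEQ_le_const[of "\<lambda>m. q ^ m * K"]) auto
qed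

definition window_excess :: "(nat \<Rightarrow> nat \<times> nat) \<Rightarrow> real" where
  "window_excess \<sigma> =
    max 0 (max (edge (parent (\<sigma> 0)) - xval \<sigma>) (xval \<sigma> - edge (Suc (parent (\<sigma> 0)))))"

lemma window_excess_shift:
  assumes "admissible \<sigma>"
  shows "window_excess \<sigma> \<le> omega * window_excess (shift \<sigma>)"
proof -
  let ?c = "\<sigma> 0" and ?x' = "xval (shift \<sigma>)" and ?e = "window_excess (shift \<sigma>)"
  have "fst ?c = parent (shift \<sigma> 0)" "symbol ?c"
    using assms by (simp_all add: admissible_def shift_def)
  then have "edge (fst ?c) - ?e \<le> ?x'" "?x' \<le> edge (Suc (fst ?c)) + ?e"
    by (auto simp: window_excess_def)
  then have "omega * (edge (fst ?c) - ?e) \<le> omega * ?x'" "omega * ?x' \<le> omega * (edge (Suc (fst ?c)) + ?e)"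
    using omega_pos by (simp_all add: mult_left_mono)
  moreover have "edge (parent ?c) \<le> piece_lo ?c" "piece_hi ?c \<le> edge (Suc (parent ?c))"
    using piece_in_window[OF \<open>symbol ?c\<close>] by simp_all
  moreover have "0 \<le> omega * ?e"
    using omega_pos by (simp add: window_excess_def)
  ultimately show ?thesis
    unfolding window_excess_def[of \<sigma>] xval_unfold[OF assms] piece_lo_def piece_hi_def
    by (simp add: algebra_simps)
qed

lemma window_excess_le:
  assumes "admissible \<sigma>"
  shows "window_excess \<sigma> \<le> 1 / (1 - omega) + 1"
proof -
  have "parent (\<sigma> 0) < 7"
    using assms parent_less_7 by (simp add: admissible_def)
  then have "0 \<le> edge (parent (\<sigma> 0))" "edge (Suc (parent (\<sigma> 0))) \<le> 1"
    "edge (parent (\<sigma> 0)) \<le> 1" "0 \<le> edge (Suc (parent (\<sigma> 0)))"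
    using edge_bounds edge_less_edge_Suc by fastforce+
  moreover have "0 \<le> 1 / (1 - omega)"
    using omega_less_1 by simp
  ultimately show ?thesis
    using abs_xval_le[OF assms] by (simp add: window_excess_def abs_le_iff)
qed

lemma xval_in_window:
  assumes "admissible \<sigma>"
  shows "edge (parent (\<sigma> 0)) \<le> xval \<sigma> \<and> xval \<sigma> \<le> edge (Suc (parent (\<sigma> 0)))"
proof -
  have "window_excess \<sigma> \<le> 0"
    using bounded_contracting_nonpos[where P = admissible and f = shift and g = window_excess and q = omega,
        OF admissible_shift window_excess_shift window_excess_le less_imp_le[OF omega_pos] omega_less_1 assms] .
  then show ?thesis
    by (simp add: window_excess_def)
qed

lemma xval_eq_edge_imp_top_symbol:
  assumes "admissible \<sigma>" "xval \<sigma> = edge (Suc (parent (\<sigma> 0)))"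
  shows "\<sigma> 0 = top_symbol (parent (\<sigma> 0))" "xval (shift \<sigma>) = edge (Suc (parent (\<sigma> 1)))"
proof -
  let ?c = "\<sigma> 0"
  have c: "symbol ?c" "fst ?c = parent (shift \<sigma> 0)"
    using assms(1) by (simp_all add: admissible_def shift_def)
  have "xval (shift \<sigma>) \<le> edge (Suc (fst ?c))"
    using xval_in_window[OF admissible_shift[OF assms(1)]] c(2) by simp
  then have "omega * xval (shift \<sigma>) \<le> omega * edge (Suc (fst ?c))"
    using omega_pos by (simp add: mult_left_mono)
  moreover have "digit ?c + omega * edge (Suc (fst ?c)) \<le> edge (Suc (parent ?c))"
    using piece_in_window[OF c(1)] by (simp add: piece_hi_def)
  moreover have "digit ?c + omega * xval (shift \<sigma>) = edge (Suc (parent ?c))"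
    using assms(2) xval_unfold[OF assms(1)] by simp
  ultimately have "piece_hi ?c = edge (Suc (parent ?c))"
    "omega * xval (shift \<sigma>) = omega * edge (Suc (fst ?c))"
    unfolding piece_hi_def by linarith+
  then have "piece_hi ?c = edge (Suc (parent ?c))" "xval (shift \<sigma>) = edge (Suc (fst ?c))"
    using omega_pos by simp_all
  then show "?c = top_symbol (parent ?c)" "xval (shift \<sigma>) = edge (Suc (parent (\<sigma> 1)))"
    using piece_hi_eq_imp_top_symbol[OF c(1)] c(2) by (simp_all add: shift_def)
qed

text \<open>On a right edge every tail stays on a right edge, which makes \<open>\<sigma>\<close> end in a forbidden tail.\<close>

lemma xval_less_edge:
  assumes "\<sigma> \<in> Vseq"
  shows "xval \<sigma> < edge (Suc (parent (\<sigma> 0)))"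
proof (rule ccontr)
  let ?p = "\<lambda>i. parent (\<sigma> i)" and ?\<sigma> = "\<lambda>i n. \<sigma> (n + i)"
  have adm: "admissible \<sigma>"
    using assms by (simp add: Vseq_iff)
  then have adm_from: "admissible (?\<sigma> i)" for i
    by (simp add: admissible_def)
  assume "\<not> xval \<sigma> < edge (Suc (?p 0))"
  then have "xval \<sigma> = edge (Suc (?p 0))"
    using xval_in_window[OF adm] by simp
  then have top_from: "xval (?\<sigma> i) = edge (Suc (?p i))" for i
  proof (induction i)
    case (Suc i)
    then show ?case
      using xval_eq_edge_imp_top_symbol(2)[OF adm_from[of i]] by (simp add: shift_def)
  qed simp
  have top: "\<sigma> i = top_symbol (?p i)" for i
    using xval_eq_edge_imp_top_symbol(1)[of "?\<sigma> i"] adm_from[of i] top_from[of i] by simp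
  have p_less_7: "?p i < 7" for i
    using adm parent_less_7 by (simp add: admissible_def)
  have p_Suc: "?p (Suc i) = (if ?p i = 0 then 6 else ?p i)" for i
    using adm top[of i] fst_top_symbol[OF p_less_7[of i]] by (simp add: admissible_def)
  have p_const: "?p (Suc i) = ?p 1 \<and> ?p 1 \<noteq> 0" for i
    using p_Suc by (induction i) simp_all
  have "\<forall>k\<ge>1. \<sigma> k = top_symbol (?p 1)"
    using top p_const by (metis Suc_le_D One_nat_def)
  moreover have "top_symbol (?p 1) \<in> forbidden_tails"
    using p_const[of 0] p_less_7[of 1] by (simp add: forbidden_tails_eq)
  ultimately show False
    using assms unfolding Vseq_iff by blast
qed

lemma xval_in_piece:
  assumes "\<sigma> \<in> Vseq"
  shows "piece_lo (\<sigma> 0) \<le> xval \<sigma> \<and> xval \<sigma> < piece_hi (\<sigma> 0)"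
proof -
  have adm: "admissible \<sigma>"
    using assms by (simp add: Vseq_iff)
  then have "fst (\<sigma> 0) = parent (shift \<sigma> 0)"
    by (simp add: admissible_def shift_def)
  then have "edge (fst (\<sigma> 0)) \<le> xval (shift \<sigma>)" "xval (shift \<sigma>) < edge (Suc (fst (\<sigma> 0)))"
    using xval_in_window[OF admissible_shift[OF adm]] xval_less_edge[OF Vseq_shift[OF assms]] by simp_all
  then show ?thesis
    unfolding piece_lo_def piece_hi_def xval_unfold[OF adm] using omega_pos by simp
qed

lemma xval_inj:
  assumes "\<sigma> \<in> Vseq" "\<tau> \<in> Vseq" "xval \<sigma> = xval \<tau>"
  shows "\<sigma> = \<tau>"
proof
  fix i
  show "\<sigma> i = \<tau> i"
    using assms
  proof (induction i arbitrary: \<sigma> \<tau>)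
    case 0
    then show ?case
      using piece_unique xval_in_piece by (metis Vseq_iff admissible_def)
  next
    case (Suc i)
    then have "\<sigma> 0 = \<tau> 0"
      using piece_unique xval_in_piece by (metis Vseq_iff admissible_def)
    with Suc.prems have "xval (shift \<sigma>) = xval (shift \<tau>)"
      using xval_unfold omega_pos by (simp add: Vseq_iff)
    then have "shift \<sigma> i = shift \<tau> i"
      using Suc.IH Suc.prems Vseq_shift by blast
    then show ?case
      by (simp add: shift_def)
  qed
qed

definition greedy_symbol :: "real \<Rightarrow> nat \<times> nat" where
  "greedy_symbol y = (SOME c. symbol c \<and> piece_lo c \<le> y \<and> y < piece_hi c)"

definition greedy_step :: "real \<Rightarrow> real" where
  "greedy_step y = (y - digit (greedy_symbol y)) / omega"

definition greedy_code :: "real \<Rightarrow> nat \<Rightarrow> nat \<times> nat" where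
  "greedy_code y i = greedy_symbol ((greedy_step ^^ i) y)"

lemma greedy_symbol:
  assumes "0 \<le> y" "y < 1"
  shows "symbol (greedy_symbol y) \<and> piece_lo (greedy_symbol y) \<le> y \<and> y < piece_hi (greedy_symbol y)"
  unfolding greedy_symbol_def using piece_exists[OF assms] by (rule someI_ex)

lemma greedy_step:
  assumes "0 \<le> y" "y < 1"
  shows "y = digit (greedy_symbol y) + omega * greedy_step y"
    and "edge (fst (greedy_symbol y)) \<le> greedy_step y" "greedy_step y < edge (Suc (fst (greedy_symbol y)))"
    and "0 \<le> greedy_step y" "greedy_step y < 1"
proof -
  let ?c = "greedy_symbol y"
  show y: "y = digit ?c + omega * greedy_step y"
    using omega_pos by (simp add: greedy_step_def)
  have "omega * edge (fst ?c) \<le> omega * greedy_step y" "omega * greedy_step y < omega * edge (Suc (fst ?c))"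
    using greedy_symbol[OF assms] y unfolding piece_lo_def piece_hi_def by linarith+
  then show "edge (fst ?c) \<le> greedy_step y" "greedy_step y < edge (Suc (fst ?c))"
    using omega_pos by simp_all
  then show "0 \<le> greedy_step y" "greedy_step y < 1"
    using edge_bounds[of "fst ?c"] greedy_symbol[OF assms] by (simp_all add: symbol_def)
qed

lemma greedy_orbit: "0 \<le> y \<Longrightarrow> y < 1 \<Longrightarrow> 0 \<le> (greedy_step ^^ i) y \<and> (greedy_step ^^ i) y < 1"
  by (induction i) (simp_all add: greedy_step)

lemma greedy_code_admissible:
  assumes "0 \<le> y" "y < 1"
  shows "admissible (greedy_code y)"
  unfolding admissible_def
proof
  fix i
  let ?z = "(greedy_step ^^ i) y"
  have z: "0 \<le> ?z" "?z < 1"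
    using greedy_orbit[OF assms] by auto
  let ?c = "greedy_symbol ?z" and ?c' = "greedy_symbol (greedy_step ?z)"
  have "symbol ?c'" "edge (parent ?c') \<le> greedy_step ?z" "greedy_step ?z < edge (Suc (parent ?c'))"
    using greedy_symbol[OF greedy_step(4,5)[OF z]] piece_in_window by fastforce+
  then have "parent ?c' = fst ?c"
    using window_unique[OF parent_less_7] greedy_step(2,3)[OF z] greedy_symbol[OF z]
    by (simp add: symbol_def)
  then show "symbol (greedy_code y i) \<and> fst (greedy_code y i) = parent (greedy_code y (Suc i))"
    using greedy_symbol[OF z] by (simp add: greedy_code_def)
qed

lemma greedy_expansion:
  assumes "0 \<le> y" "y < 1"
  shows "y = (\<Sum>i<m. digit (greedy_code y i) * omega ^ i) + omega ^ m * (greedy_step ^^ m) y"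
proof (induction m)
  case (Suc m)
  let ?z = "(greedy_step ^^ m) y"
  have "y = (\<Sum>i<m. digit (greedy_code y i) * omega ^ i) + omega ^ m * ?z"
    by (fact Suc.IH)
  also have "?z = digit (greedy_code y m) + omega * greedy_step ?z"
    using greedy_step(1) greedy_orbit[OF assms] by (simp add: greedy_code_def)
  finally show ?case
    by (simp add: algebra_simps)
qed simp

lemma xval_greedy_code:
  assumes "0 \<le> y" "y < 1"
  shows "xval (greedy_code y) = y"
proof -
  have "(\<lambda>m. omega ^ m * (greedy_step ^^ m) y) \<longlonglongrightarrow> 0"
  proof (rule tendsto_sandwich[of "\<lambda>_. 0" _ _ "\<lambda>m. omega ^ m"])
    show "\<forall>\<^sub>F m in sequentially. 0 \<le> omega ^ m * (greedy_step ^^ m) y"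
      "\<forall>\<^sub>F m in sequentially. omega ^ m * (greedy_step ^^ m) y \<le> omega ^ m"
      using greedy_orbit[OF assms] omega_pos by (auto intro!: always_eventually mult_left_le less_imp_le)
    show "(\<lambda>m. omega ^ m) \<longlonglongrightarrow> 0"
      using omega_pos omega_less_1 by (intro LIMSEQ_power_zero) simp
  qed simp
  then have "(\<lambda>m. y - omega ^ m * (greedy_step ^^ m) y) \<longlonglongrightarrow> y"
    using tendsto_diff[OF tendsto_const[of y]] by fastforce
  moreover have "(\<Sum>i<m. digit (greedy_code y i) * omega ^ i) = y - omega ^ m * (greedy_step ^^ m) y" for m
    using greedy_expansion[OF assms, of m] by linarith
  ultimately have "(\<lambda>m. \<Sum>i<m. digit (greedy_code y i) * omega ^ i) \<longlonglongrightarrow> y"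
    by simp
  then show ?thesis
    unfolding xval_def
    using summable_LIMSEQ[OF summable_xval[OF greedy_code_admissible[OF assms]]] LIMSEQ_unique by blast
qed

lemma xval_const: "xval (\<lambda>_. c) = digit c / (1 - omega)"
  using suminf_mult[OF summable_omega_power, of "digit c"] suminf_geometric[of omega] omega_pos omega_less_1
  by (simp add: xval_def)

lemma greedy_code_in_Vseq:
  assumes "0 \<le> y" "y < 1"
  shows "greedy_code y \<in> Vseq"
proof -
  have "\<not> (\<forall>k\<ge>K. greedy_code y k = top_symbol p)" if p: "1 \<le> p" "p \<le> 6" for p K
  proof
    assume tail: "\<forall>k\<ge>K. greedy_code y k = top_symbol p"
    let ?z = "(greedy_step ^^ K) y" and ?e = "top_symbol p"
    have z: "0 \<le> ?z" "?z < 1"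
      using greedy_orbit[OF assms] by auto
    have code_z: "greedy_code ?z = (\<lambda>_. ?e)"
    proof
      fix k
      have "(greedy_step ^^ k) ?z = (greedy_step ^^ (k + K)) y"
        by (simp add: funpow_add)
      with tail show "greedy_code ?z k = ?e"
        by (simp add: greedy_code_def)
    qed
    have "?z = digit ?e / (1 - omega)"
      using xval_greedy_code[OF z] unfolding code_z xval_const by simp
    moreover have "?z < piece_hi ?e"
      using greedy_symbol[OF z] fun_cong[OF code_z, of 0] by (simp add: greedy_code_def)
    moreover have "piece_hi ?e = digit ?e + omega * piece_hi ?e"
      using top_symbol[of p] fst_top_symbol[of p] p by (simp add: piece_hi_def)
    then have "piece_hi ?e = digit ?e / (1 - omega)"
      using omega_less_1 by (simp add: field_simps)
    ultimately show False
      by simp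
  qed
  then show ?thesis
    using greedy_code_admissible[OF assms] by (auto simp: Vseq_iff forbidden_tails_eq)
qed

lemma code_eq_greedy_code:
  assumes "0 \<le> x" "x < 1"
  shows "code x = greedy_code x"
  unfolding code_def
proof (rule the_equality)
  show "greedy_code x \<in> Vseq \<and> xval (greedy_code x) = x"
    using greedy_code_in_Vseq[OF assms] xval_greedy_code[OF assms] by simp
  fix \<sigma>
  assume "\<sigma> \<in> Vseq \<and> xval \<sigma> = x"
  then show "\<sigma> = greedy_code x"
    using xval_inj[of \<sigma> "greedy_code x"] greedy_code_in_Vseq[OF assms] xval_greedy_code[OF assms] by simp
qed

lemma gamma_eq_greedy_step: "0 \<le> x \<Longrightarrow> x < 1 \<Longrightarrow> gamma x = greedy_step x"
  by (simp add: gamma_def greedy_step_def code_eq_greedy_code greedy_code_def)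

lemma funpow_gamma: "0 \<le> x \<Longrightarrow> x < 1 \<Longrightarrow> (gamma ^^ m) x = (greedy_step ^^ m) x"
proof (induction m)
  case (Suc m)
  then show ?case
    using gamma_eq_greedy_step greedy_orbit by simp
qed simp

lemma periodic_point_times_in_Zlam:
  assumes "0 \<le> x" "x < 1" "(gamma ^^ n) x = x"
  shows "x * (1 - omega ^ n) \<in> Zlam"
proof -
  have "x * (1 - omega ^ n) = (\<Sum>i<n. digit (greedy_code x i) * omega ^ i)"
    using greedy_expansion[OF assms(1,2), of n] assms(3) funpow_gamma[OF assms(1,2)]
    by (simp add: algebra_simps)
  also have "\<dots> \<in> Zlam"
    using greedy_code_admissible[OF assms(1,2)]
    by (intro Zlam_sum Zlam_mult Zlam_power omega_in_Zlam digit_in_Zlam) (simp add: admissible_def)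
  finally show ?thesis .
qed

lemma times_ideal_ints_in_Zlam:
  assumes "x * \<beta> \<in> Zlam" "m \<in> ideal_ints \<beta>"
  shows "x * of_int m \<in> Zlam"
proof -
  obtain \<alpha> where "\<alpha> \<in> Zlam" "of_int m = \<beta> * \<alpha>"
    using assms(2) by (auto simp: ideal_ints_def)
  then show ?thesis
    using Zlam_mult[OF assms(1)] by (simp add: mult.assoc)
qed

theorem mainTheorem7:
  fixes n :: nat
  assumes "n \<ge> 1"
  shows "even (Mn n)
       \<and> (even n \<longrightarrow> 14 dvd Mn n)
       \<and> Mn n dvd zl_norm (1 - omega ^ n)
       \<and> (\<forall>x\<in>{0..<1::real}. (gamma ^^ n) x = x \<longrightarrow> x \<in> (\<lambda>y. y / of_int (Mn n)) ` Zlam)"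
proof (intro conjI impI ballI)
  note M = Mn_least[OF assms]
  show "even (Mn n)"
    using ideal_ints_even[OF M(2)] .
  show "even n \<Longrightarrow> 14 dvd Mn n"
    using ideal_ints_14_dvd[OF M(2)] .
  show "Mn n dvd zl_norm (1 - omega ^ n)"
    using Mn_dvd_zl_norm[OF assms] .
  fix x :: real
  assume "x \<in> {0..<1}" "(gamma ^^ n) x = x"
  then have "x * (1 - omega ^ n) \<in> Zlam"
    by (intro periodic_point_times_in_Zlam) simp_all
  then have "x * of_int (Mn n) \<in> Zlam"
    using M(2) by (rule times_ideal_ints_in_Zlam)
  moreover have "x = x * of_int (Mn n) / of_int (Mn n)"
    using M(1) by simp
  ultimately show "x \<in> (\<lambda>y. y / of_int (Mn n)) ` Zlam"
    by blast
qed

end
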